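(* There exists a $9\times 9$ bimagic square whose $81$ entries are pairwise distinct strings of length $6$ over $\{0,1,2\}$, each being the concatenation of two $3$-digit palindromes (read as decimal numbers, leading zeros allowed), with magic sum $S1=999999$, and such that each of the nine $3\times3$ blocks has entry sum $999999$.
   Context: A magic square of order $n$ is an $n\times n$ array of numbers in which the sums of the entries of each row, of each column and of each of the two principal diagonals all equal a common value $S1$. It is bimagic if in addition the sums of the squares of the entries of each row, each column and each of the two principal diagonals all equal a common value $S2$. The $3\times3$ blocks are the subarrays with rows $3p+1,\dots,3p+3$ and columns $3q+1,\dots,3q+3$, $p,q\in\{0,1,2\}$. *)

theory Defs
  imports Main
begin

definition dec_value :: "nat list \<Rightarrow> nat" where
  "dec_value ds = foldl (\<lambda>acc d. 10 * acc + d) 0 ds"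

definition is_palindrome :: "nat list \<Rightarrow> bool" where
  "is_palindrome xs \<longleftrightarrow> rev xs = xs"

definition valid_entry :: "nat list \<Rightarrow> bool" where
  "valid_entry s \<longleftrightarrow> length s = 6 \<and> set s \<subseteq> {0,1,2}
     \<and> is_palindrome (take 3 s) \<and> is_palindrome (drop 3 s)"

definition magic9 :: "(nat \<Rightarrow> nat \<Rightarrow> nat) \<Rightarrow> nat \<Rightarrow> bool" where
  "magic9 A S \<longleftrightarrow>
     (\<forall>i<9. (\<Sum>j<9. A i j) = S) \<and> (\<forall>j<9. (\<Sum>i<9. A i j) = S)
     \<and> (\<Sum>i<9. A i i) = S \<and> (\<Sum>i<9. A i (8 - i)) = S"

definition bimagic9 :: "(nat \<Rightarrow> nat \<Rightarrow> nat) \<Rightarrow> nat \<Rightarrow> nat \<Rightarrow> bool" where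
  "bimagic9 A S1 S2 \<longleftrightarrow> magic9 A S1 \<and> magic9 (\<lambda>i j. (A i j)^2) S2"

definition block_sums9 :: "(nat \<Rightarrow> nat \<Rightarrow> nat) \<Rightarrow> nat \<Rightarrow> bool" where
  "block_sums9 A S \<longleftrightarrow> (\<forall>p<3. \<forall>q<3. (\<Sum>i<3. \<Sum>j<3. A (3*p+i) (3*q+j)) = S)"

end

theory Submission
  imports Defs
begin

(* The square is given explicitly.  Write a row index i in {0..8} as
   i = 3*i1 + i0 and a column index as j = 3*j1 + j0 (its base-3 digits).  The
   entry in cell (i,j) is the digit string [a,b,a,c,d,c], where the ternary digits
   a, b, c, d are affine functions of (i1,i0,j1,j0) over Z/3.  Any such string is a
   concatenation of two 3-digit palindromes over {0,1,2}, with decimal value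
   101000 a + 10000 b + 101 c + 10 d.  The four affine forms are chosen so that
   (a,b,c,d) determines (i,j) by another affine map over Z/3 (so the entries are
   distinct), and so that along every row, column and diagonal each digit and each
   pair of digits is equidistributed, and in every 3x3 block each digit is; this
   makes the line sums 9 * 111111 = 999999, the block sums likewise, and the line
   sums of squares constant. *)

definition pal_pair :: "nat \<Rightarrow> nat \<Rightarrow> nat \<Rightarrow> nat \<Rightarrow> nat list" where
  "pal_pair a b c d = [a, b, a, c, d, c]"

lemma valid_entry_pal_pair:
  assumes "a < 3" "b < 3" "c < 3" "d < 3"
  shows "valid_entry (pal_pair a b c d)"
  using assms by (simp add: valid_entry_def pal_pair_def is_palindrome_def) arith

text \<open>The decimal value is linear in the four digits, which reduces all sums
  over the square to sums of digits.\<close>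

lemma dec_value_pal_pair:
  "dec_value (pal_pair a b c d) = 101000 * a + 10000 * b + 101 * c + 10 * d"
  by (simp add: dec_value_def pal_pair_def)

definition digit_a :: "nat \<Rightarrow> nat \<Rightarrow> nat" where
  "digit_a i j = (2*(i div 3) + 2*(j div 3) + j mod 3 + 2) mod 3"

definition digit_b :: "nat \<Rightarrow> nat \<Rightarrow> nat" where
  "digit_b i j = (i div 3 + 2*(i mod 3) + 2*(j div 3)) mod 3"

definition digit_c :: "nat \<Rightarrow> nat \<Rightarrow> nat" where
  "digit_c i j = (2*(i mod 3) + 2*(j div 3) + 2*(j mod 3)) mod 3"

definition digit_d :: "nat \<Rightarrow> nat \<Rightarrow> nat" where
  "digit_d i j = (2*(i div 3) + 2*(i mod 3) + j mod 3 + 2) mod 3"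

definition square :: "nat \<Rightarrow> nat \<Rightarrow> nat list" where
  "square i j = pal_pair (digit_a i j) (digit_b i j) (digit_c i j) (digit_d i j)"

definition cell_value :: "nat \<Rightarrow> nat \<Rightarrow> nat" where
  "cell_value i j =
     101000 * digit_a i j + 10000 * digit_b i j + 101 * digit_c i j + 10 * digit_d i j"

lemma dec_value_square: "dec_value (square i j) = cell_value i j"
  by (simp add: square_def dec_value_pal_pair cell_value_def)

lemma valid_entry_square: "valid_entry (square i j)"
  unfolding square_def
  by (rule valid_entry_pal_pair) (simp_all add: digit_a_def digit_b_def digit_c_def digit_d_def)

definition decode :: "nat list \<Rightarrow> nat \<times> nat" where
  "decode s = (let a = s!0; b = s!1; c = s!3; d = s!4 in
     (3 * ((a + 2*c + d + 2) mod 3) + (a + b + c + 1) mod 3,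
      3 * ((b + c + d + 1) mod 3) + (2*a + b + 2*d + 1) mod 3))"

text \<open>These turn each remaining claim into finitely many closed numeral
  identities that the simplifier evaluates.\<close>

lemma all_less_9:
  "(\<forall>i<(9::nat). P i) \<longleftrightarrow> P 0 \<and> P 1 \<and> P 2 \<and> P 3 \<and> P 4 \<and> P 5 \<and> P 6 \<and> P 7 \<and> P 8"
  by (simp add: numeral_eq_Suc All_less_Suc2)

lemma all_less_3: "(\<forall>i<(3::nat). P i) \<longleftrightarrow> P 0 \<and> P 1 \<and> P 2"
  by (simp add: numeral_eq_Suc All_less_Suc2)

lemma sum_less_9:
  "(\<Sum>i<(9::nat). f i) = f 0 + f 1 + f 2 + f 3 + f 4 + f 5 + f 6 + f 7 + (f 8 :: nat)"
  by (simp add: eval_nat_numeral)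

lemma sum_less_3: "(\<Sum>i<(3::nat). f i) = f 0 + f 1 + (f 2 :: nat)"
  by (simp add: eval_nat_numeral)

lemma decode_square: "\<forall>i<9. \<forall>j<9. decode (square i j) = (i, j)"
  unfolding all_less_9
  by (simp add: decode_def square_def pal_pair_def digit_a_def digit_b_def digit_c_def digit_d_def)

lemma square_inj: "inj_on (\<lambda>(i, j). square i j) ({..<9} \<times> {..<9})"
  by (rule inj_on_inverseI[where g = decode]) (use decode_square in auto)

lemma cell_value_magic: "magic9 cell_value 999999"
  unfolding magic9_def all_less_9 sum_less_9
  by (simp add: cell_value_def digit_a_def digit_b_def digit_c_def digit_d_def)

lemma cell_value_squares_magic: "magic9 (\<lambda>i j. (cell_value i j)\<^sup>2) 172916950695"
  unfolding magic9_def all_less_9 sum_less_9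
  by (simp add: cell_value_def digit_a_def digit_b_def digit_c_def digit_d_def)

lemma cell_value_block_sums: "block_sums9 cell_value 999999"
  unfolding block_sums9_def all_less_3 sum_less_3
  by (simp add: cell_value_def digit_a_def digit_b_def digit_c_def digit_d_def)

theorem mainTheorem5:
  shows "\<exists>M :: nat \<Rightarrow> nat \<Rightarrow> nat list.
     (\<forall>i<9. \<forall>j<9. valid_entry (M i j))
   \<and> inj_on (\<lambda>(i,j). M i j) ({..<9} \<times> {..<9})
   \<and> (\<exists>S2. bimagic9 (\<lambda>i j. dec_value (M i j)) 999999 S2)
   \<and> block_sums9 (\<lambda>i j. dec_value (M i j)) 999999"
proof (intro exI conjI allI impI)
  have entry_values: "(\<lambda>i j. dec_value (square i j)) = cell_value"
    by (simp add: dec_value_square)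
  show "valid_entry (square i j)" for i j
    by (rule valid_entry_square)
  show "inj_on (\<lambda>(i, j). square i j) ({..<9} \<times> {..<9})"
    by (rule square_inj)
  show "bimagic9 (\<lambda>i j. dec_value (square i j)) 999999 172916950695"
    unfolding entry_values bimagic9_def using cell_value_magic cell_value_squares_magic by blast
  show "block_sums9 (\<lambda>i j. dec_value (square i j)) 999999"
    unfolding entry_values by (rule cell_value_block_sums)
qed

end
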